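(* Let $G=(V,E)$ be a simple undirected graph with $m=|E|$, $b:V\to\mathbb{Z}_{\ge0}$ with $\beta=\max_v b(v)$, and $f:2^E\to\mathbb{R}_{\ge0}$ a normalized monotone submodular function satisfying the local dependence assumption. Then the Lazy Greedy algorithm for submodular $b$-matching runs in $O(\beta\, m\log m)$ time.
   Context: A $b$-matching is $M\subseteq E$ with $|M\cap\delta(v)|\le b(v)$ for all $v$ ($\delta(v)$ = edges incident to $v$); $v$ is saturated if equality holds; an edge is available w.r.t. $M$ if it is not in $M$ and both its endpoints are unsaturated. Marginal gain: $\rho_e(A)=f(A\cup\{e\})-f(A)$. Local dependence assumption: the marginal gain $\rho_e(A)$ of an edge $e$ depends only on the edges of $A$ adjacent to $e$ (sharing an endpoint with $e$). Lazy Greedy algorithm: start with $M=\emptyset$ and a max-heap containing all edges, each keyed by $f(\{e\})$. While the heap is nonempty: pop the top edge $e$ and recompute its marginal gain $\rho_e(M)$; if $e$ is available, then if $\rho_e(M)$ is at least the key of the current heap top (or the heap is empty) add $e$ to $M$, otherwise push $e$ back with key $\rho_e(M)$; unavailable popped edges are discarded. Running time counts each marginal gain evaluation and availability check as constant time. *)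

theory Defs
  imports Main "HOL-Library.Multiset" Complex_Main
begin

type_synonym vert = nat
type_synonym edge = "vert set"

definition simple_graph :: "vert set \<Rightarrow> edge set \<Rightarrow> bool" where
  "simple_graph V E \<longleftrightarrow> finite V \<and> (\<forall>e\<in>E. \<exists>u\<in>V. \<exists>v\<in>V. u \<noteq> v \<and> e = {u, v})"

definition bmax :: "vert set \<Rightarrow> (vert \<Rightarrow> nat) \<Rightarrow> nat" where
  "bmax V b = Max (insert 0 (b ` V))"

definition marginal :: "(edge set \<Rightarrow> real) \<Rightarrow> edge \<Rightarrow> edge set \<Rightarrow> real" where
  "marginal f e A = f (A \<union> {e}) - f A"

text \<open>Edges of E adjacent to e (sharing an endpoint with e; this includes e itself).\<close>
definition adjacent_edges :: "edge set \<Rightarrow> edge \<Rightarrow> edge set" where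
  "adjacent_edges E e = {e' \<in> E. e' \<inter> e \<noteq> {}}"

definition normalized :: "edge set \<Rightarrow> (edge set \<Rightarrow> real) \<Rightarrow> bool" where
  "normalized E f \<longleftrightarrow> f {} = 0"

definition nonneg_on :: "edge set \<Rightarrow> (edge set \<Rightarrow> real) \<Rightarrow> bool" where
  "nonneg_on E f \<longleftrightarrow> (\<forall>A. A \<subseteq> E \<longrightarrow> 0 \<le> f A)"

definition monotone_on_edges :: "edge set \<Rightarrow> (edge set \<Rightarrow> real) \<Rightarrow> bool" where
  "monotone_on_edges E f \<longleftrightarrow> (\<forall>A B. A \<subseteq> B \<and> B \<subseteq> E \<longrightarrow> f A \<le> f B)"

definition submodular_on :: "edge set \<Rightarrow> (edge set \<Rightarrow> real) \<Rightarrow> bool" where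
  "submodular_on E f \<longleftrightarrow>
     (\<forall>A B. A \<subseteq> E \<and> B \<subseteq> E \<longrightarrow> f (A \<union> B) + f (A \<inter> B) \<le> f A + f B)"

definition local_dependence :: "edge set \<Rightarrow> (edge set \<Rightarrow> real) \<Rightarrow> bool" where
  "local_dependence E f \<longleftrightarrow>
     (\<forall>e A B. e \<in> E \<and> A \<subseteq> E \<and> B \<subseteq> E \<and>
        A \<inter> adjacent_edges E e = B \<inter> adjacent_edges E e \<longrightarrow>
        marginal f e A = marginal f e B)"

definition deg_in :: "edge set \<Rightarrow> vert \<Rightarrow> nat" where
  "deg_in M v = card {e \<in> M. v \<in> e}"

definition unsaturated :: "(vert \<Rightarrow> nat) \<Rightarrow> edge set \<Rightarrow> vert \<Rightarrow> bool" where
  "unsaturated b M v \<longleftrightarrow> deg_in M v < b v"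

definition available :: "(vert \<Rightarrow> nat) \<Rightarrow> edge set \<Rightarrow> edge \<Rightarrow> bool" where
  "available b M e \<longleftrightarrow> e \<notin> M \<and> (\<forall>v\<in>e. unsaturated b M v)"

text \<open>Cost model: each binary-heap
  operation (pop / push) on a heap of size s costs 1 + log2 s; each marginal-gain
  evaluation, availability check and peek at the top key costs 1.\<close>
type_synonym heap = "(edge \<times> real) set"
type_synonym state = "edge set \<times> heap"

definition heap_op_cost :: "nat \<Rightarrow> real" where
  "heap_op_cost s = 1 + log 2 (real s)"

definition top_key :: "heap \<Rightarrow> real" where
  "top_key H = Max (snd ` H)"

inductive lg_step :: "(vert \<Rightarrow> nat) \<Rightarrow> (edge set \<Rightarrow> real) \<Rightarrow> state \<Rightarrow> state \<Rightarrow> real \<Rightarrow> bool"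
  for b f where
  add: "\<lbrakk> (e, k) \<in> H; \<forall>p\<in>H. snd p \<le> k; H0 = H - {(e, k)};
          available b M e; H0 = {} \<or> marginal f e M \<ge> top_key H0 \<rbrakk>
        \<Longrightarrow> lg_step b f (M, H) (M \<union> {e}, H0) (heap_op_cost (card H) + 3)"
| reinsert: "\<lbrakk> (e, k) \<in> H; \<forall>p\<in>H. snd p \<le> k; H0 = H - {(e, k)};
          available b M e; H0 \<noteq> {}; marginal f e M < top_key H0 \<rbrakk>
        \<Longrightarrow> lg_step b f (M, H) (M, insert (e, marginal f e M) H0)
              (heap_op_cost (card H) + 3 + heap_op_cost (card H0 + 1))"
| discard: "\<lbrakk> (e, k) \<in> H; \<forall>p\<in>H. snd p \<le> k; H0 = H - {(e, k)};
          \<not> available b M e \<rbrakk>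
        \<Longrightarrow> lg_step b f (M, H) (M, H0) (heap_op_cost (card H) + 2)"

inductive lg_steps :: "(vert \<Rightarrow> nat) \<Rightarrow> (edge set \<Rightarrow> real) \<Rightarrow> state \<Rightarrow> state \<Rightarrow> real \<Rightarrow> bool"
  for b f where
  refl: "lg_steps b f s s 0"
| step: "\<lbrakk> lg_step b f s s' c; lg_steps b f s' s'' t \<rbrakk> \<Longrightarrow> lg_steps b f s s'' (c + t)"

definition lg_init_heap :: "edge set \<Rightarrow> (edge set \<Rightarrow> real) \<Rightarrow> heap" where
  "lg_init_heap E f = (\<lambda>e. (e, f {e})) ` E"

text \<open>Initialization: m evaluations of f({e}) and m heap insertions.\<close>
definition lg_init_cost :: "edge set \<Rightarrow> real" where
  "lg_init_cost E = real (card E) * (1 + heap_op_cost (card E))"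

end

theory Submission
  imports Defs
begin

text \<open>Amortized analysis with a potential on heap entries. An entry for the edge e is popped
  once for good, plus once for each time its key is stale, i.e. differs from the current gain of e.
  By local dependence, the gain of e changes only when an edge adjacent to e enters M, and since M
  is a b-matching at most 2\<beta> such edges ever do. Hence the entry potential
  1 + 2(2\<beta> - #(adjacent edges of e in M)) + [key stale] never increases when an edge is added and
  drops by one whenever the entry is popped; so every iteration lowers the total potential by at
  least one at cost O(log m), and the initial potential is at most m(4\<beta> + 2).\<close>

definition b_matching :: "(vert \<Rightarrow> nat) \<Rightarrow> edge set \<Rightarrow> bool" where
  "b_matching b M \<longleftrightarrow> (\<forall>v. deg_in M v \<le> b v)"

lemma simple_graph_finite_edges:
  assumes "simple_graph V E"
  shows "finite E"
proof (rule finite_subset)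
  show "E \<subseteq> Pow V" using assms unfolding simple_graph_def by auto
  show "finite (Pow V)" using assms unfolding simple_graph_def by simp
qed

lemma bmax_ge: "finite V \<Longrightarrow> v \<in> V \<Longrightarrow> b v \<le> bmax V b"
  unfolding bmax_def by simp

lemma b_matching_insert_available:
  assumes "finite M" "b_matching b M" "available b M e"
  shows "b_matching b (insert e M)"
  unfolding b_matching_def
proof
  fix v
  show "deg_in (insert e M) v \<le> b v"
  proof (cases "v \<in> e")
    case True
    have "{x \<in> insert e M. v \<in> x} = insert e {x \<in> M. v \<in> x}"
      using True by auto
    then have "deg_in (insert e M) v \<le> deg_in M v + 1"
      unfolding deg_in_def using \<open>finite M\<close> by (simp add: card_insert_if)
    moreover have "deg_in M v < b v"
      using assms(3) True unfolding available_def unsaturated_def by blast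
    ultimately show ?thesis by simp
  next
    case False
    then have "{x \<in> insert e M. v \<in> x} = {x \<in> M. v \<in> x}" by auto
    then show ?thesis using assms(2) unfolding b_matching_def deg_in_def by simp
  qed
qed

lemma card_adjacent_edges_le:
  assumes "finite M" "b_matching b M"
  shows "card (M \<inter> adjacent_edges E {u, v}) \<le> b u + b v"
proof -
  have "card (M \<inter> adjacent_edges E {u, v}) \<le> card ({x \<in> M. u \<in> x} \<union> {x \<in> M. v \<in> x})"
    using \<open>finite M\<close> by (intro card_mono) (auto simp: adjacent_edges_def)
  also have "\<dots> \<le> deg_in M u + deg_in M v"
    unfolding deg_in_def by (rule card_Un_le)
  also have "\<dots> \<le> b u + b v"
    using assms(2) unfolding b_matching_def by (simp add: add_mono)
  finally show ?thesis .
qed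

lemma card_adjacent_edges_bmax_ge:
  assumes "simple_graph V E" "e \<in> E" "M \<subseteq> E" "b_matching b M"
  shows "card (M \<inter> adjacent_edges E e) \<le> 2 * bmax V b"
proof -
  obtain u v where "u \<in> V" "v \<in> V" "e = {u, v}" and "finite V"
    using assms(1,2) unfolding simple_graph_def by blast
  moreover have "finite M"
    using assms(1,3) simple_graph_finite_edges finite_subset by blast
  ultimately have "card (M \<inter> adjacent_edges E e) \<le> b u + b v"
    using card_adjacent_edges_le assms(4) by blast
  also have "\<dots> \<le> 2 * bmax V b"
    using bmax_ge[of V u b] bmax_ge[of V v b] \<open>u \<in> V\<close> \<open>v \<in> V\<close> \<open>finite V\<close> by linarith
  finally show ?thesis .
qed

definition entry_potential ::
    "edge set \<Rightarrow> (edge set \<Rightarrow> real) \<Rightarrow> real \<Rightarrow> edge set \<Rightarrow> edge \<times> real \<Rightarrow> real" where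
  "entry_potential E f \<beta> M q =
     1 + 2 * (2 * \<beta> - card (M \<inter> adjacent_edges E (fst q)))
       + (if snd q = marginal f (fst q) M then 0 else 1)"

definition heap_potential ::
    "edge set \<Rightarrow> (edge set \<Rightarrow> real) \<Rightarrow> real \<Rightarrow> edge set \<Rightarrow> heap \<Rightarrow> real" where
  "heap_potential E f \<beta> M H = (\<Sum>q\<in>H. entry_potential E f \<beta> M q)"

lemma entry_potential_ge_one:
  assumes "card (M \<inter> adjacent_edges E (fst q)) \<le> 2 * \<beta>"
  shows "1 \<le> entry_potential E f (real \<beta>) M q"
proof -
  have "real (card (M \<inter> adjacent_edges E (fst q))) \<le> 2 * real \<beta>"
    using assms by linarith
  then show ?thesis unfolding entry_potential_def by simp
qed

lemma entry_potential_le: "entry_potential E f \<beta> M q \<le> 4 * \<beta> + 2"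
  unfolding entry_potential_def by simp

lemma entry_potential_insert_le:
  assumes "local_dependence E f" "finite E" "fst q \<in> E" "M \<subseteq> E" "e \<in> E"
  shows "entry_potential E f \<beta> (insert e M) q \<le> entry_potential E f \<beta> M q"
proof -
  let ?A = "M \<inter> adjacent_edges E (fst q)"
  let ?B = "insert e M \<inter> adjacent_edges E (fst q)"
  have "?A \<subseteq> ?B" "finite ?B"
    using assms(2,4,5) by (auto intro: finite_subset)
  show ?thesis
  proof (cases "?A = ?B")
    case True
    moreover have "insert e M \<subseteq> E" using assms(4,5) by simp
    ultimately have "marginal f (fst q) (insert e M) = marginal f (fst q) M"
      using assms(1,3,4) unfolding local_dependence_def by (simp add: Int_assoc)
    with True show ?thesis unfolding entry_potential_def by simp
  next
    case False
    then have "card ?A < card ?B"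
      using \<open>?A \<subseteq> ?B\<close> \<open>finite ?B\<close> by (meson psubset_card_mono psubsetI)
    then show ?thesis unfolding entry_potential_def by simp
  qed
qed

lemma heap_potential_remove:
  "finite H \<Longrightarrow> q \<in> H \<Longrightarrow>
    heap_potential E f \<beta> M H = entry_potential E f \<beta> M q + heap_potential E f \<beta> M (H - {q})"
  unfolding heap_potential_def by (rule sum.remove)

lemma heap_potential_le: "heap_potential E f \<beta> M H \<le> real (card H) * (4 * \<beta> + 2)"
  unfolding heap_potential_def by (rule sum_bounded_above) (rule entry_potential_le)

lemma heap_potential_init_le:
  assumes "finite E"
  shows "heap_potential E f (real \<beta>) M (lg_init_heap E f) \<le> real (card E) * (4 * real \<beta> + 2)"
proof -
  have "heap_potential E f (real \<beta>) M (lg_init_heap E f)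
      \<le> real (card (lg_init_heap E f)) * (4 * real \<beta> + 2)"
    by (rule heap_potential_le)
  also have "\<dots> \<le> real (card E) * (4 * real \<beta> + 2)"
    using assms unfolding lg_init_heap_def by (intro mult_right_mono) (simp_all add: card_image_le)
  finally show ?thesis .
qed

text \<open>Since the heap is a set of pairs, \<open>inj_on fst H\<close> (one entry per edge) is what bounds
  its size by m.\<close>
definition lg_invariant :: "edge set \<Rightarrow> (vert \<Rightarrow> nat) \<Rightarrow> edge set \<Rightarrow> heap \<Rightarrow> bool" where
  "lg_invariant E b M H \<longleftrightarrow>
     finite H \<and> fst ` H \<subseteq> E \<and> inj_on fst H \<and> M \<subseteq> E \<and> b_matching b M"

lemma lg_invariant_init: "finite E \<Longrightarrow> lg_invariant E b {} (lg_init_heap E f)"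
  unfolding lg_invariant_def lg_init_heap_def b_matching_def deg_in_def
  by (auto simp: inj_on_def)

lemma lg_invariant_entry_potential_ge_one:
  assumes "simple_graph V E" "lg_invariant E b M H" "q \<in> H"
  shows "1 \<le> entry_potential E f (real (bmax V b)) M q"
proof (rule entry_potential_ge_one)
  have "fst q \<in> E" "M \<subseteq> E" "b_matching b M"
    using assms(2,3) unfolding lg_invariant_def by auto
  then show "card (M \<inter> adjacent_edges E (fst q)) \<le> 2 * bmax V b"
    using card_adjacent_edges_bmax_ge[OF assms(1)] by blast
qed

lemma lg_invariant_heap_potential_nonneg:
  assumes "simple_graph V E" "lg_invariant E b M H"
  shows "0 \<le> heap_potential E f (real (bmax V b)) M H"
  unfolding heap_potential_def
proof (rule sum_nonneg)
  fix q assume "q \<in> H"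
  then have "1 \<le> entry_potential E f (real (bmax V b)) M q"
    by (rule lg_invariant_entry_potential_ge_one[OF assms])
  then show "0 \<le> entry_potential E f (real (bmax V b)) M q" by simp
qed

lemma lg_invariant_remove_entry:
  "lg_invariant E b M H \<Longrightarrow> lg_invariant E b M (H - {q})"
  unfolding lg_invariant_def by (meson Diff_subset finite_Diff image_mono inj_on_subset order_trans)

lemma lg_step_invariant:
  assumes "finite E" "lg_invariant E b M H" "lg_step b f (M, H) (M', H') c"
  shows "lg_invariant E b M' H'"
proof -
  have inv: "finite H" "fst ` H \<subseteq> E" "inj_on fst H" "M \<subseteq> E" "b_matching b M"
    using assms(2) unfolding lg_invariant_def by auto
  from assms(3) show ?thesis
  proof cases
    case (add e k)
    have "e \<in> E" using \<open>(e, k) \<in> H\<close> inv(2) by force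
    have "finite M" using inv(4) assms(1) by (rule finite_subset)
    then have "b_matching b (insert e M)"
      using inv(5) \<open>available b M e\<close> by (rule b_matching_insert_available)
    then show ?thesis
      using add \<open>e \<in> E\<close> inv(4) lg_invariant_remove_entry[OF assms(2)]
      unfolding lg_invariant_def by simp
  next
    case (reinsert e k)
    have "e \<in> E" using \<open>(e, k) \<in> H\<close> inv(2) by force
    moreover have "e \<notin> fst ` (H - {(e, k)} - {(e, marginal f e M)})"
      using \<open>(e, k) \<in> H\<close> inv(3) unfolding inj_on_def by force
    ultimately show ?thesis
      using reinsert lg_invariant_remove_entry[OF assms(2)] unfolding lg_invariant_def by simp
  next
    case (discard e k)
    then show ?thesis using lg_invariant_remove_entry[OF assms(2)] by simp
  qed
qed

lemma lg_step_potential_decrease: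
  assumes "simple_graph V E" "local_dependence E f" "lg_invariant E b M H"
    and "lg_step b f (M, H) (M', H') c"
  shows "heap_potential E f (real (bmax V b)) M' H' + 1
    \<le> heap_potential E f (real (bmax V b)) M H"
proof -
  let ?\<Phi> = "heap_potential E f (real (bmax V b))"
  let ?\<phi> = "entry_potential E f (real (bmax V b))"
  have "finite E" using assms(1) by (rule simple_graph_finite_edges)
  have inv: "finite H" "fst ` H \<subseteq> E" "M \<subseteq> E"
    using assms(3) unfolding lg_invariant_def by auto
  have pop: "?\<Phi> M H = ?\<phi> M q + ?\<Phi> M (H - {q})" "1 \<le> ?\<phi> M q" if "q \<in> H" for q
    using heap_potential_remove[OF inv(1) that]
      lg_invariant_entry_potential_ge_one[OF assms(1,3) that] by auto
  from assms(4) show ?thesis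
  proof cases
    case (add e k)
    have "e \<in> E" using \<open>(e, k) \<in> H\<close> inv(2) by force
    have "?\<Phi> (insert e M) (H - {(e, k)}) \<le> ?\<Phi> M (H - {(e, k)})"
      unfolding heap_potential_def
    proof (rule sum_mono)
      fix q assume "q \<in> H - {(e, k)}"
      then have "fst q \<in> E" using inv(2) by force
      show "?\<phi> (insert e M) q \<le> ?\<phi> M q"
        using assms(2) \<open>finite E\<close> \<open>fst q \<in> E\<close> inv(3) \<open>e \<in> E\<close> by (rule entry_potential_insert_le)
    qed
    then show ?thesis using add pop[OF \<open>(e, k) \<in> H\<close>] by simp
  next
    case (reinsert e k)
    let ?g = "marginal f e M"
    have "top_key (H - {(e, k)}) \<le> k"
      using reinsert inv(1) unfolding top_key_def by (simp add: Max_le_iff)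
    then have "?\<phi> M (e, k) = ?\<phi> M (e, ?g) + 1"
      using reinsert unfolding entry_potential_def by simp
    moreover have "?\<Phi> M (insert (e, ?g) (H - {(e, k)})) \<le> ?\<phi> M (e, ?g) + ?\<Phi> M (H - {(e, k)})"
      using inv(1) pop(2)[of "(e, ?g)"] unfolding heap_potential_def by (auto simp: sum.insert_if)
    ultimately show ?thesis using reinsert pop[OF \<open>(e, k) \<in> H\<close>] by simp
  next
    case (discard e k)
    then show ?thesis using pop[OF \<open>(e, k) \<in> H\<close>] by simp
  qed
qed

lemma heap_op_cost_nonneg: "0 \<le> heap_op_cost n"
  unfolding heap_op_cost_def by (cases "n = 0") (simp add: log_def, simp)

lemma heap_op_cost_mono: "1 \<le> n \<Longrightarrow> n \<le> n' \<Longrightarrow> heap_op_cost n \<le> heap_op_cost n'"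
  unfolding heap_op_cost_def by simp

lemma heap_op_cost_le_log: "1 \<le> n \<Longrightarrow> heap_op_cost n \<le> 2 * log 2 (real n + 1)"
proof -
  assume "1 \<le> n"
  then have "log 2 (real n) \<le> log 2 (real n + 1)" "1 \<le> log 2 (real n + 1)" by simp_all
  then show ?thesis unfolding heap_op_cost_def by linarith
qed

lemma lg_step_cost_le:
  assumes "finite E" "lg_invariant E b M H" "lg_step b f (M, H) (M', H') c"
  shows "c \<le> 3 + 2 * heap_op_cost (card E)"
proof -
  have "finite H" "fst ` H \<subseteq> E" "inj_on fst H"
    using assms(2) unfolding lg_invariant_def by auto
  then have "card H \<le> card E" using assms(1) by (simp add: card_inj_on_le)
  have "H \<noteq> {}" using assms(3) by cases auto
  then have "1 \<le> card H" using \<open>finite H\<close> by (simp add: Suc_leI card_gt_0_iff)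
  with \<open>card H \<le> card E\<close> have pop_cost: "0 \<le> heap_op_cost (card H)" "heap_op_cost (card H) \<le> heap_op_cost (card E)"
    using heap_op_cost_nonneg heap_op_cost_mono by auto
  from assms(3) show ?thesis
  proof cases
    case (reinsert e k)
    have "card (H - {(e, k)}) + 1 = card H"
      using \<open>finite H\<close> \<open>(e, k) \<in> H\<close> \<open>1 \<le> card H\<close> by simp
    then show ?thesis using reinsert pop_cost by simp
  qed (use pop_cost in simp_all)
qed

lemma lg_steps_cost_le_potential:
  fixes \<Phi> :: "edge set \<Rightarrow> heap \<Rightarrow> real"
  assumes "lg_steps b f (M, H) s' t" "P M H"
    and decrease: "\<And>M H M' H' c. P M H \<Longrightarrow> lg_step b f (M, H) (M', H') c \<Longrightarrow>
      P M' H' \<and> \<Phi> M' H' + 1 \<le> \<Phi> M H \<and> c \<le> K"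
    and nonneg: "\<And>M H. P M H \<Longrightarrow> 0 \<le> \<Phi> M H" and "0 \<le> K"
  shows "t \<le> \<Phi> M H * K"
  using assms(1,2)
proof (induction "(M, H)" s' t arbitrary: M H rule: lg_steps.induct)
  case refl
  then show ?case using nonneg \<open>0 \<le> K\<close> by simp
next
  case (step s' c s'' t)
  obtain M' H' where s': "s' = (M', H')" by fastforce
  then have "P M' H'" "\<Phi> M' H' + 1 \<le> \<Phi> M H" "c \<le> K"
    using decrease[OF \<open>P M H\<close>] step.hyps(1) by auto
  then have "c + t \<le> (\<Phi> M' H' + 1) * K"
    using step.hyps(3)[OF s'] by (simp add: algebra_simps)
  also have "\<dots> \<le> \<Phi> M H * K" using \<open>\<Phi> M' H' + 1 \<le> \<Phi> M H\<close> \<open>0 \<le> K\<close> by (rule mult_right_mono)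
  finally show ?case .
qed

lemma lg_total_cost_bound:
  fixes m \<beta> :: nat
  shows "real m * (1 + heap_op_cost m) + real m * (4 * real \<beta> + 2) * (3 + 2 * heap_op_cost m)
    \<le> 45 * real (max 1 \<beta>) * real m * log 2 (real m + 1)"
proof (cases "m = 0")
  case True
  then show ?thesis by simp
next
  case False
  let ?B = "real (max 1 \<beta>)" and ?L = "log 2 (real m + 1)"
  have "heap_op_cost m \<le> 2 * ?L" "1 \<le> ?L" "1 \<le> ?B" "real \<beta> \<le> ?B"
    using False heap_op_cost_le_log[of m] by simp_all
  then have "?L \<le> ?B * ?L" "4 * real \<beta> + 2 \<le> 6 * ?B" "3 + 2 * heap_op_cost m \<le> 7 * ?L"
    using mult_right_mono[of 1 ?B ?L] by linarith+
  then have "1 + heap_op_cost m \<le> 3 * (?B * ?L)"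
    "(4 * real \<beta> + 2) * (3 + 2 * heap_op_cost m) \<le> 6 * ?B * (7 * ?L)"
    using \<open>heap_op_cost m \<le> 2 * ?L\<close> heap_op_cost_nonneg[of m]
    by (linarith, intro mult_mono) simp_all
  then have "real m * (1 + heap_op_cost m) + real m * ((4 * real \<beta> + 2) * (3 + 2 * heap_op_cost m))
      \<le> real m * (3 * (?B * ?L)) + real m * (6 * ?B * (7 * ?L))"
    by (intro add_mono mult_left_mono) simp_all
  then show ?thesis by (simp add: algebra_simps)
qed

theorem lemma1:
  "\<exists>C::real. \<forall>(V::vert set) (E::edge set) (b::vert \<Rightarrow> nat) (f::edge set \<Rightarrow> real).
     simple_graph V E \<and> nonneg_on E f \<and> normalized E f \<and> monotone_on_edges E f \<and>
     submodular_on E f \<and> local_dependence E f \<longrightarrow>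
     (\<forall>s t. lg_steps b f ({}, lg_init_heap E f) s t \<longrightarrow>
        lg_init_cost E + t \<le>
          C * real (max 1 (bmax V b)) * real (card E) * log 2 (real (card E) + 1))"
proof (intro exI[of _ 45] allI impI, elim conjE)
  fix V E b f s t
  assume G: "simple_graph V E" and LD: "local_dependence E f"
    and run: "lg_steps b f ({}, lg_init_heap E f) s t"
  let ?\<Phi> = "heap_potential E f (real (bmax V b))"
  let ?K = "3 + 2 * heap_op_cost (card E)"
  have "finite E" using G by (rule simple_graph_finite_edges)
  have "t \<le> ?\<Phi> {} (lg_init_heap E f) * ?K"
    using run lg_invariant_init[OF \<open>finite E\<close>]
  proof (rule lg_steps_cost_le_potential[where P = "lg_invariant E b"])
    show "lg_invariant E b M' H' \<and> ?\<Phi> M' H' + 1 \<le> ?\<Phi> M H \<and> c \<le> ?K"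
      if "lg_invariant E b M H" "lg_step b f (M, H) (M', H') c" for M H M' H' c
      using lg_step_invariant[OF \<open>finite E\<close> that] lg_step_potential_decrease[OF G LD that]
        lg_step_cost_le[OF \<open>finite E\<close> that] by blast
  qed (use lg_invariant_heap_potential_nonneg[OF G] heap_op_cost_nonneg in auto)
  also have "\<dots> \<le> real (card E) * (4 * real (bmax V b) + 2) * ?K"
    using heap_potential_init_le[OF \<open>finite E\<close>] heap_op_cost_nonneg
    by (intro mult_right_mono) simp_all
  finally show "lg_init_cost E + t \<le> 45 * real (max 1 (bmax V b)) * real (card E) * log 2 (real (card E) + 1)"
    using lg_total_cost_bound[of "card E" "bmax V b"] unfolding lg_init_cost_def by linarith
qed

end
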